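(* The bracket induced on $\mathbf T_{m+1}$ by ${\rm PB}_1({\rm R};\mathcal F)$ is given, for $1\le i,j\le m$ and all $k$, by $\{b_k,b_{k+1}\}_1=\alpha a_k^{(1)}$; $\{b_k,a_k^{(j)}\}_1=-a_k^{(j)}$, $\{a_k^{(j)},b_{k+j}\}_1=-a_k^{(j)}$; $\{b_k,a_{k+1}^{(j)}\}_1=\alpha a_k^{(j+1)}$, $\{a_k^{(j)},b_{k+j+1}\}_1=\alpha a_k^{(j+1)}$; $\{a_k^{(i)},a_{k+i}^{(j)}\}_1=-a_k^{(i+j)}$; $\{a_k^{(i)},a_{k+i+1}^{(j)}\}_1=\alpha a_k^{(i+j+1)}$; all other brackets between coordinates (except those obtained by antisymmetry) vanish. (Here $N\ge2m+2$.)
   Context: Periodic lattice setting: $N\ge2$, $m\ge1$; $\mathfrak g=\{X(\lambda)\in gl(N)[\lambda,\lambda^{-1}]:\Omega X(\lambda)\Omega^{-1}=X(\omega\lambda)\}$, $\omega=e^{2\pi i/N}$, $\Omega=\mathrm{diag}(1,\omega,\dots,\omega^{N-1})$, matrix indices and lattice subscripts modulo $N$; $\langle X,Y\rangle$ = coefficient of $\lambda^0$ in $\mathrm{tr}(XY)$; $\pi_+,\pi_-$ projections onto nonnegative, resp. negative, powers of $\lambda$ (graded pieces $\mathfrak g_p=\{\lambda^p\sum_{j-k\equiv p}x_{jk}E_{jk}\}$); ${\rm R}=\pi_+-\pi_-$. Gradient: $\langle\nabla\varphi(L),M\rangle=\frac{d}{d\varepsilon}\varphi(L+\varepsilon M)|_{\varepsilon=0}$.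 $\alpha$ real; $\mathcal E=\lambda\sum_kE_{k+1,k}$; $\mathcal F=I-\alpha\mathcal E$. $[X,Y]^{(\mathcal F)}=X\mathcal FY-Y\mathcal FX$; ${\rm PB}_1({\rm R};\mathcal F)$: $\{\varphi,\psi\}_1(L)=\frac12\langle[{\rm R}\nabla\varphi,\nabla\psi]^{(\mathcal F)}+[\nabla\varphi,{\rm R}\nabla\psi]^{(\mathcal F)},L\rangle$. $\mathbf T_{m+1}$ (a Poisson submanifold for this bracket) = set of $T=\mathcal E+\sum_kb_kE_{kk}+\sum_{j=1}^m\lambda^{-j}\sum_ka_k^{(j)}E_{k,k+j}$; coordinates $b_k(X)$ = coefficient of $\lambda^0E_{kk}$, $a_k^{(j)}(X)$ = coefficient of $\lambda^{-j}E_{k,k+j}$; convention $a_k^{(i)}=0$ for $i>m$. *)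

theory Defs
  imports "HOL-Analysis.Analysis"
begin

text \<open>An element X of gl(N)[lambda, lambda^-1] is represented by its coefficient
function: X p r s = coefficient of lambda^p in the (r,s) matrix entry,
matrix indices r, s in {0..<N} (indices are taken modulo N).\<close>

type_synonym loopmat = "int \<Rightarrow> nat \<Rightarrow> nat \<Rightarrow> complex"

definition lsupp :: "loopmat \<Rightarrow> int set" where
  "lsupp X = {p. \<exists>r s. X p r s \<noteq> 0}"

text \<open>The twisted loop algebra g: Omega X(lambda) Omega^-1 = X(omega lambda) means
that the coefficient of lambda^p in entry (r,s) vanishes unless r - s = p (mod N).\<close>
definition gset :: "nat \<Rightarrow> loopmat set" where
  "gset N = {X. finite (lsupp X) \<and> (\<forall>p r s. (N \<le> r \<or> N \<le> s) \<longrightarrow> X p r s = 0)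
      \<and> (\<forall>p r s. X p r s \<noteq> 0 \<longrightarrow> (int r - int s - p) mod int N = 0)}"

definition ladd :: "loopmat \<Rightarrow> loopmat \<Rightarrow> loopmat" where
  "ladd X Y = (\<lambda>p r s. X p r s + Y p r s)"

definition lsub :: "loopmat \<Rightarrow> loopmat \<Rightarrow> loopmat" where
  "lsub X Y = (\<lambda>p r s. X p r s - Y p r s)"

definition lscale :: "complex \<Rightarrow> loopmat \<Rightarrow> loopmat" where
  "lscale c X = (\<lambda>p r s. c * X p r s)"

definition lmul :: "nat \<Rightarrow> loopmat \<Rightarrow> loopmat \<Rightarrow> loopmat" where
  "lmul N X Y = (\<lambda>p r s. \<Sum>q\<in>lsupp X. \<Sum>l<N. X q r l * Y (p - q) l s)"

definition pairing :: "nat \<Rightarrow> loopmat \<Rightarrow> loopmat \<Rightarrow> complex" where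
  "pairing N X Y = (\<Sum>r<N. lmul N X Y 0 r r)"

definition Rop :: "loopmat \<Rightarrow> loopmat" where
  "Rop X = (\<lambda>p r s. if 0 \<le> p then X p r s else - X p r s)"

definition Emat :: "nat \<Rightarrow> loopmat" where
  "Emat N = (\<lambda>p r s. if p = 1 \<and> r < N \<and> s < N \<and> r = Suc s mod N then 1 else 0)"

definition Imat :: "nat \<Rightarrow> loopmat" where
  "Imat N = (\<lambda>p r s. if p = 0 \<and> r < N \<and> r = s then 1 else 0)"

definition Fmat :: "nat \<Rightarrow> real \<Rightarrow> loopmat" where
  "Fmat N \<alpha> = lsub (Imat N) (lscale (complex_of_real \<alpha>) (Emat N))"

definition brF :: "nat \<Rightarrow> real \<Rightarrow> loopmat \<Rightarrow> loopmat \<Rightarrow> loopmat" where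
  "brF N \<alpha> X Y = lsub (lmul N (lmul N X (Fmat N \<alpha>)) Y) (lmul N (lmul N Y (Fmat N \<alpha>)) X)"

definition grad :: "nat \<Rightarrow> (loopmat \<Rightarrow> complex) \<Rightarrow> loopmat \<Rightarrow> loopmat" where
  "grad N \<phi> L = (THE X. X \<in> gset N \<and>
      (\<forall>M\<in>gset N. pairing N X M = deriv (\<lambda>\<epsilon>. \<phi> (ladd L (lscale \<epsilon> M))) 0))"

definition PB1 :: "nat \<Rightarrow> real \<Rightarrow> (loopmat \<Rightarrow> complex) \<Rightarrow> (loopmat \<Rightarrow> complex) \<Rightarrow> loopmat \<Rightarrow> complex" where
  "PB1 N \<alpha> \<phi> \<psi> L = 1/2 * pairing N
      (ladd (brF N \<alpha> (Rop (grad N \<phi> L)) (grad N \<psi> L))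
            (brF N \<alpha> (grad N \<phi> L) (Rop (grad N \<psi> L)))) L"

text \<open>Points of T_{m+1}: b r = b_r, a j r = a_r^(j).\<close>
definition Tmat :: "nat \<Rightarrow> nat \<Rightarrow> (nat \<Rightarrow> complex) \<Rightarrow> (nat \<Rightarrow> nat \<Rightarrow> complex) \<Rightarrow> loopmat" where
  "Tmat N m b a = (\<lambda>p r s.
     if r < N \<and> s < N then
       (if p = 1 then (if r = Suc s mod N then 1 else 0)
        else if p = 0 then (if r = s then b r else 0)
        else if - int m \<le> p \<and> p < 0 then
          (if s = (r + nat (- p)) mod N then a (nat (- p)) r else 0)
        else 0)
     else 0)"

definition Tset :: "nat \<Rightarrow> nat \<Rightarrow> loopmat set" where
  "Tset N m = {Tmat N m b a | b a. True}"

definition bco :: "nat \<Rightarrow> nat \<Rightarrow> loopmat \<Rightarrow> complex" where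
  "bco N k X = X 0 (k mod N) (k mod N)"

definition aco :: "nat \<Rightarrow> nat \<Rightarrow> nat \<Rightarrow> loopmat \<Rightarrow> complex" where
  "aco N j k X = X (- int j) (k mod N) ((k + j) mod N)"

datatype coord = Bc nat | Ac nat nat  \<comment> \<open>Bc k = b_k, Ac j k = a_k^(j)\<close>

fun coordfun :: "nat \<Rightarrow> coord \<Rightarrow> loopmat \<Rightarrow> complex" where
  "coordfun N (Bc k) = bco N k"
| "coordfun N (Ac j k) = aco N j k"

fun valid_coord :: "nat \<Rightarrow> coord \<Rightarrow> bool" where
  "valid_coord m (Bc k) = True"
| "valid_coord m (Ac j k) = (1 \<le> j \<and> j \<le> m)"

text \<open>Ordered pairs of coordinates for which the theorem lists a bracket.\<close>
fun listed :: "nat \<Rightarrow> coord \<Rightarrow> coord \<Rightarrow> bool" where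
  "listed N (Bc k) (Bc l) = (l mod N = (k + 1) mod N)"
| "listed N (Bc k) (Ac j l) = (l mod N = k mod N \<or> l mod N = (k + 1) mod N)"
| "listed N (Ac j k) (Bc l) = (l mod N = (k + j) mod N \<or> l mod N = (k + j + 1) mod N)"
| "listed N (Ac i k) (Ac j l) = (l mod N = (k + i) mod N \<or> l mod N = (k + i + 1) mod N)"

end

theory Submission
  imports Defs
begin

text \<open>Every coordinate function is linear, so its gradient is a single monomial
\<open>\<lambda>^p E_rs\<close> with \<open>p \<ge> 0\<close> (\<open>E_kk\<close> for \<open>b_k = a_k^(0)\<close>, \<open>\<lambda>^j E_{k+j,k}\<close> for
\<open>a_k^(j)\<close>), unique because the pairing is nondegenerate on \<open>g\<close>. As \<open>R\<close> fixes such
monomials, the bracket of two coordinates is \<open>\<langle>X F Y - Y F X, L\<rangle>\<close> for monomials \<open>X, Y\<close>,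
and with \<open>F = I - \<alpha> E\<close> this is a sum of four Kronecker-delta terms, each reading off one
coefficient of \<open>L\<close>. For the listed pairs the index shifts that occur lie strictly between
\<open>0\<close> and \<open>N\<close> once \<open>N \<ge> 2m + 2\<close>, so exactly the expected deltas fire; the single
exception, \<open>N = i + j + 2\<close> in the last family, produces a coefficient \<open>a^(i+j+1)\<close> with
\<open>i + j + 1 > m\<close>, which vanishes on \<open>T_{m+1}\<close>.\<close>

definition lmonom :: "int \<Rightarrow> nat \<Rightarrow> nat \<Rightarrow> loopmat" where
  "lmonom p a b = (\<lambda>n r s. if n = p \<and> r = a \<and> s = b then 1 else 0)"

lemma lmul_eq_sum_superset:
  assumes "finite S" "lsupp X \<subseteq> S"
  shows "lmul N X Y n r s = (\<Sum>q\<in>S. \<Sum>l<N. X q r l * Y (n - q) l s)"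
  unfolding lmul_def
proof (rule sum.mono_neutral_left[OF assms])
  show "\<forall>q\<in>S - lsupp X. (\<Sum>l<N. X q r l * Y (n - q) l s) = 0"
    by (simp add: lsupp_def)
qed

lemma lmul_lmonom_left:
  assumes "b < N"
  shows "lmul N (lmonom p a b) Y = (\<lambda>n r s. if r = a then Y (n - p) b s else 0)"
proof (intro ext)
  fix n r s
  have "lmul N (lmonom p a b) Y n r s = (\<Sum>q\<in>{p}. \<Sum>l<N. lmonom p a b q r l * Y (n - q) l s)"
    by (rule lmul_eq_sum_superset) (auto simp: lsupp_def lmonom_def)
  then show "lmul N (lmonom p a b) Y n r s = (if r = a then Y (n - p) b s else 0)"
    using assms by (simp add: lmonom_def if_distrib[of "\<lambda>x. x * _"] cong: if_cong)
qed

lemma lmul_lmonom_right: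
  assumes "finite (lsupp X)" "a < N"
  shows "lmul N X (lmonom p a b) = (\<lambda>n r s. if s = b then X (n - p) r a else 0)"
proof (intro ext)
  fix n r s
  have inner: "(\<Sum>l<N. X q r l * lmonom p a b (n - q) l s)
      = (if q = n - p then (if s = b then X q r a else 0) else 0)" for q using assms by (auto simp: lmonom_def if_distrib[of "\<lambda>x. _ * x"] cong: if_cong)
  have "lmul N X (lmonom p a b) n r s
      = (\<Sum>q\<in>insert (n - p) (lsupp X). \<Sum>l<N. X q r l * lmonom p a b (n - q) l s)"
    by (rule lmul_eq_sum_superset) (use assms in auto)
  then show "lmul N X (lmonom p a b) n r s = (if s = b then X (n - p) r a else 0)"
    using assms by (simp only: inner sum.delta') simp
qed

lemma pairing_eq_sum_superset:
  assumes "finite S" "lsupp X \<subseteq> S"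
  shows "pairing N X L = (\<Sum>q\<in>S. \<Sum>r<N. \<Sum>l<N. X q r l * L (- q) l r)"
  unfolding pairing_def lmul_eq_sum_superset[OF assms] by (simp add: sum.swap[of _ S])

lemma pairing_lmonom_left:
  assumes "a < N" "b < N"
  shows "pairing N (lmonom p a b) M = M (- p) b a"
  using assms by (simp add: pairing_def lmul_lmonom_left)

lemma pairing_lmonom_right:
  assumes "finite (lsupp X)" "a < N" "b < N"
  shows "pairing N X (lmonom p a b) = X (- p) b a"
  using assms by (simp add: pairing_def lmul_lmonom_right)

lemma lsupp_ladd: "lsupp (ladd X Y) \<subseteq> lsupp X \<union> lsupp Y"
  by (auto simp: lsupp_def ladd_def) (metis add_0)

lemma pairing_ladd:
  assumes "finite (lsupp X)" "finite (lsupp Y)"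
  shows "pairing N (ladd X Y) L = pairing N X L + pairing N Y L"
proof -
  let ?S = "lsupp X \<union> lsupp Y"
  have S: "finite ?S" using assms by simp
  have "pairing N (ladd X Y) L = (\<Sum>q\<in>?S. \<Sum>r<N. \<Sum>l<N. ladd X Y q r l * L (- q) l r)"
    using S lsupp_ladd by (rule pairing_eq_sum_superset)
  also have "\<dots> = (\<Sum>q\<in>?S. \<Sum>r<N. \<Sum>l<N. X q r l * L (- q) l r)
                  + (\<Sum>q\<in>?S. \<Sum>r<N. \<Sum>l<N. Y q r l * L (- q) l r)"
    by (simp add: ladd_def distrib_right sum.distrib)
  also have "\<dots> = pairing N X L + pairing N Y L"
    by (simp add: pairing_eq_sum_superset[OF S])
  finally show ?thesis .
qed

lemma lmonom_in_gset:
  assumes "a < N" "b < N" "(int a - int b - p) mod int N = 0"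
  shows "lmonom p a b \<in> gset N"
proof -
  have "finite (lsupp (lmonom p a b))"
    by (rule finite_subset[of _ "{p}"]) (auto simp: lsupp_def lmonom_def)
  then show ?thesis
    using assms unfolding gset_def by (auto simp: lmonom_def)
qed

lemma gset_eqI:
  assumes X: "X \<in> gset N" and Y: "Y \<in> gset N"
    and pairing_eq: "\<And>M. M \<in> gset N \<Longrightarrow> pairing N X M = pairing N Y M"
  shows "X = Y"
proof (intro ext)
  fix n x y
  show "X n x y = Y n x y"
  proof (cases "x < N \<and> y < N \<and> (int x - int y - n) mod int N = 0")
    case True
    moreover have "int y - int x - (- n) = - (int x - int y - n)"
      by simp
    ultimately have "(int y - int x - (- n)) mod int N = 0"
      by (simp only: zmod_zminus1_eq_if) simp
    then have M: "lmonom (- n) y x \<in> gset N"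
      using True by (intro lmonom_in_gset) auto
    have "X n x y = pairing N X (lmonom (- n) y x)"
      using X True by (simp add: gset_def pairing_lmonom_right)
    also have "\<dots> = pairing N Y (lmonom (- n) y x)"
      using M by (rule pairing_eq)
    also have "\<dots> = Y n x y"
      using Y True by (simp add: gset_def pairing_lmonom_right)
    finally show ?thesis .
  next
    case False
    have vanish: "Z n x y = 0" if "Z \<in> gset N" for Z
      using that False unfolding gset_def by (auto simp: not_less) blast
    show ?thesis
      using vanish[OF X] vanish[OF Y] by simp
  qed
qed

lemma grad_eqI:
  assumes "X \<in> gset N"
    and "\<And>M. M \<in> gset N \<Longrightarrow> pairing N X M = deriv (\<lambda>\<epsilon>. \<phi> (ladd L (lscale \<epsilon> M))) 0"
  shows "grad N \<phi> L = X"
  unfolding grad_def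
proof (rule the_equality)
  fix Y
  assume "Y \<in> gset N \<and>
    (\<forall>M\<in>gset N. pairing N Y M = deriv (\<lambda>\<epsilon>. \<phi> (ladd L (lscale \<epsilon> M))) 0)"
  then show "Y = X"
    using assms by (intro gset_eqI) auto
qed (use assms in auto)

lemma grad_aco:
  assumes "0 < N"
  shows "grad N (aco N j k) L = lmonom (int j) ((k + j) mod N) (k mod N)"
proof (rule grad_eqI)
  have "int ((k + j) mod N) - int (k mod N) - int j
      = int N * (int k div int N - (int k + int j) div int N)"
    by (simp add: zmod_int zdiv_int minus_div_mult_eq_mod[symmetric] algebra_simps)
  then have "(int ((k + j) mod N) - int (k mod N) - int j) mod int N = 0"
    by simp
  then show "lmonom (int j) ((k + j) mod N) (k mod N) \<in> gset N"
    using assms by (intro lmonom_in_gset) auto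
next
  fix M
  have "((\<lambda>\<epsilon>. aco N j k (ladd L (lscale \<epsilon> M))) has_field_derivative aco N j k M) (at 0)"
    unfolding aco_def ladd_def lscale_def by (auto intro!: derivative_eq_intros)
  then show "pairing N (lmonom (int j) ((k + j) mod N) (k mod N)) M
      = deriv (\<lambda>\<epsilon>. aco N j k (ladd L (lscale \<epsilon> M))) 0"
    using assms by (simp add: DERIV_imp_deriv pairing_lmonom_left aco_def)
qed

lemma lsupp_lmul_lmonom_left:
  assumes "b < N"
  shows "lsupp (lmul N (lmonom p a b) Y) \<subseteq> (\<lambda>q. q + p) ` lsupp Y"
proof
  fix n assume "n \<in> lsupp (lmul N (lmonom p a b) Y)"
  then have "n - p \<in> lsupp Y"
    using assms by (auto simp: lsupp_def lmul_lmonom_left split: if_splits)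
  then show "n \<in> (\<lambda>q. q + p) ` lsupp Y"
    by (rule rev_image_eqI) simp
qed

lemma lsupp_Fmat: "lsupp (Fmat N \<alpha>) \<subseteq> {0, 1}"
  by (auto simp: lsupp_def Fmat_def lsub_def lscale_def Imat_def Emat_def)

lemma brF_lmonom:
  assumes "r < N" "s < N" "u < N" "v < N"
  shows "brF N \<alpha> (lmonom p r s) (lmonom q u v) = (\<lambda>n a b.
     (if a = r \<and> b = v then Fmat N \<alpha> (n - (p + q)) s u else 0)
   - (if a = u \<and> b = s then Fmat N \<alpha> (n - (p + q)) v r else 0))"
proof -
  have fin: "finite (lsupp (lmul N (lmonom p' r' s') (Fmat N \<alpha>)))" if "s' < N" for p' r' s'
    by (rule finite_subset[OF lsupp_lmul_lmonom_left[OF that]])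
       (use finite_subset[OF lsupp_Fmat] in simp)
  show ?thesis
    unfolding brF_def lmul_lmonom_right[OF fin[OF assms(2)] assms(3)]
      lmul_lmonom_right[OF fin[OF assms(4)] assms(1)]
    using assms by (simp add: lmul_lmonom_left lsub_def fun_eq_iff diff_diff_eq add.commute)
qed

lemma lsupp_brF_lmonom:
  assumes "r < N" "s < N" "u < N" "v < N"
  shows "lsupp (brF N \<alpha> (lmonom p r s) (lmonom q u v)) \<subseteq> {p + q, p + q + 1}"
proof
  fix n assume "n \<in> lsupp (brF N \<alpha> (lmonom p r s) (lmonom q u v))"
  then have "n - (p + q) \<in> lsupp (Fmat N \<alpha>)"
    unfolding brF_lmonom[OF assms] lsupp_def by (auto split: if_splits)
  then have "n - (p + q) \<in> {0, 1}"
    using lsupp_Fmat by blast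
  then show "n \<in> {p + q, p + q + 1}"
    by auto
qed

lemma sum_lessThan_delta2:
  fixes r v N :: nat
  assumes "r < N" "v < N"
  shows "(\<Sum>a<N. \<Sum>b<N. if a = r \<and> b = v then c else 0) = c"
proof -
  have "(\<Sum>b<N. if a = r \<and> b = v then c else 0) = (if a = r then c else 0)" for a
    using assms by (cases "a = r") simp_all
  then show ?thesis using assms by simp
qed

lemma pairing_brF_lmonom:
  assumes "r < N" "s < N" "u < N" "v < N"
  shows "pairing N (brF N \<alpha> (lmonom p r s) (lmonom q u v)) L =
      Fmat N \<alpha> 0 s u * L (- (p + q)) v r - Fmat N \<alpha> 0 v r * L (- (p + q)) s u
    + Fmat N \<alpha> 1 s u * L (- (p + q + 1)) v r - Fmat N \<alpha> 1 v r * L (- (p + q + 1)) s u"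
    (is "_ = ?rhs")
proof -
  let ?S = "{p + q, p + q + 1}"
  have "pairing N (brF N \<alpha> (lmonom p r s) (lmonom q u v)) L
      = (\<Sum>n\<in>?S. \<Sum>a<N. \<Sum>b<N. brF N \<alpha> (lmonom p r s) (lmonom q u v) n a b * L (- n) b a)"
    by (rule pairing_eq_sum_superset[OF _ lsupp_brF_lmonom[OF assms]]) simp
  also have "\<dots> = ?rhs"
    using assms
    by (simp add: brF_lmonom left_diff_distrib sum_subtractf sum_lessThan_delta2
        if_distrib[of "\<lambda>x. x * _"] cong: if_cong)
  finally show ?thesis .
qed

lemma Fmat_coeff_0: "s < N \<Longrightarrow> Fmat N \<alpha> 0 s u = (if s = u then 1 else 0)"
  by (simp add: Fmat_def lsub_def lscale_def Imat_def Emat_def)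

lemma Fmat_coeff_1:
  "s < N \<Longrightarrow> u < N \<Longrightarrow> Fmat N \<alpha> 1 s u = (if s = Suc u mod N then - complex_of_real \<alpha> else 0)"
  by (simp add: Fmat_def lsub_def lscale_def Imat_def Emat_def)

lemma Rop_lmonom: "0 \<le> p \<Longrightarrow> Rop (lmonom p a b) = lmonom p a b"
  by (auto simp: Rop_def lmonom_def fun_eq_iff)

lemma PB1_lmonom:
  assumes "grad N \<phi> L = lmonom p r s" "grad N \<psi> L = lmonom q u v" "0 \<le> p" "0 \<le> q"
    and "r < N" "s < N" "u < N" "v < N"
  shows "PB1 N \<alpha> \<phi> \<psi> L =
      (if s = u then L (- (p + q)) v r else 0) - (if v = r then L (- (p + q)) s u else 0)
    - (if s = Suc u mod N then \<alpha> * L (- (p + q + 1)) v r else 0)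
    + (if v = Suc r mod N then \<alpha> * L (- (p + q + 1)) s u else 0)"
proof -
  have "finite (lsupp (brF N \<alpha> (lmonom p r s) (lmonom q u v)))"
    by (rule finite_subset[OF lsupp_brF_lmonom[OF assms(5-8)]]) simp
  then have "PB1 N \<alpha> \<phi> \<psi> L = pairing N (brF N \<alpha> (lmonom p r s) (lmonom q u v)) L"
    unfolding PB1_def assms(1,2) Rop_lmonom[OF assms(3)] Rop_lmonom[OF assms(4)]
    by (simp add: pairing_ladd)
  then show ?thesis
    using assms(5-8) by (simp add: pairing_brF_lmonom Fmat_coeff_0 Fmat_coeff_1)
qed

lemma bco_eq_aco: "bco N k = aco N 0 k"
  by (simp add: fun_eq_iff bco_def aco_def)

lemma aco_mod_cong: "k mod N = l mod N \<Longrightarrow> aco N j k X = aco N j l X"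
  unfolding aco_def by (metis mod_add_left_eq)

lemma aco_Tset_eq_0:
  assumes "L \<in> Tset N m" "m < j"
  shows "aco N j k L = 0"
proof -
  obtain b a where "L = Tmat N m b a"
    using assms(1) unfolding Tset_def by blast
  then show ?thesis
    using assms(2) by (simp add: Tmat_def aco_def)
qed

lemma PB1_aco_aco:
  assumes "0 < N"
  shows "PB1 N \<alpha> (aco N i k) (aco N j l) L =
      (if k mod N = (l + j) mod N then aco N (i + j) l L else 0)
    - (if l mod N = (k + i) mod N then aco N (i + j) k L else 0)
    - (if k mod N = (l + j + 1) mod N then \<alpha> * aco N (i + j + 1) l L else 0)
    + (if l mod N = (k + i + 1) mod N then \<alpha> * aco N (i + j + 1) k L else 0)"
proof -
  have entries: "PB1 N \<alpha> (aco N i k) (aco N j l) L =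
      (if k mod N = (l + j) mod N then L (- (int i + int j)) (l mod N) ((k + i) mod N) else 0)
    - (if l mod N = (k + i) mod N then L (- (int i + int j)) (k mod N) ((l + j) mod N) else 0)
    - (if k mod N = Suc ((l + j) mod N) mod N
       then \<alpha> * L (- (int i + int j + 1)) (l mod N) ((k + i) mod N) else 0)
    + (if l mod N = Suc ((k + i) mod N) mod N
       then \<alpha> * L (- (int i + int j + 1)) (k mod N) ((l + j) mod N) else 0)"
    by (rule PB1_lmonom[OF grad_aco grad_aco]) (use assms in simp_all)
  show ?thesis
    unfolding entries Suc_eq_plus1
    apply (intro arg_cong2[where f="(+)"] arg_cong2[where f="(-)"] if_cong refl)
    subgoal using mod_add_cong[of k N "l + j" i i] by (simp add: aco_def ac_simps)
    subgoal using mod_add_cong[of l N "k + i" j j] by (simp add: aco_def ac_simps)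
    subgoal by (simp add: mod_Suc_eq)
    subgoal using mod_add_cong[of k N "l + j + 1" i i] by (simp add: aco_def ac_simps)
    subgoal by (simp add: mod_Suc_eq)
    subgoal using mod_add_cong[of l N "k + i + 1" j j] by (simp add: aco_def ac_simps)
    done
qed

lemma add_mod_cancel_left:
  fixes x a b N :: nat
  shows "(x + a) mod N = (x + b) mod N \<longleftrightarrow> a mod N = b mod N"
proof
  assume "(x + a) mod N = (x + b) mod N"
  then have "int ((x + a) mod N) = int ((x + b) mod N)"
    by simp
  then have "(int x + int a) mod int N = (int x + int b) mod int N"
    by (simp add: of_nat_mod)
  then have "int a mod int N = int b mod int N"
    by (metis add_diff_cancel_left' mod_diff_left_eq)
  then show "a mod N = b mod N"
    by (simp add: of_nat_mod[symmetric])
qed (rule mod_add_cong[OF refl])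

lemma mod_eq_add_mod_iff:
  fixes x b N :: nat
  shows "x mod N = (x + b) mod N \<longleftrightarrow> b mod N = 0"
  using add_mod_cancel_left[of x 0 N b] by auto

lemma PB1_aco_aco_adjacent:
  assumes "0 < i + j" "i + j + 1 < N"
  shows "PB1 N \<alpha> (aco N i k) (aco N j (k + i)) L = - aco N (i + j) k L"
proof -
  have "0 < N" using assms(2) by simp
  then show ?thesis
    using assms
    unfolding PB1_aco_aco[OF \<open>0 < N\<close>] add.assoc add_mod_cancel_left mod_eq_add_mod_iff
    by auto
qed

lemma PB1_aco_aco_one_apart:
  assumes "L \<in> Tset N m" "2 * m + 2 \<le> N" "i \<le> m" "j \<le> m"
  shows "PB1 N \<alpha> (aco N i k) (aco N j (k + i + 1)) L = \<alpha> * aco N (i + j + 1) k L"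
proof -
  have "0 < N" using assms(2) by simp
  note PB1_shift = PB1_aco_aco[OF \<open>0 < N\<close>] add.assoc add_mod_cancel_left mod_eq_add_mod_iff
  show ?thesis
  proof (cases "i + j + 2 < N")
    case True
    then show ?thesis
      unfolding PB1_shift by simp
  next
    case False
    \<comment> \<open>then \<open>N = i + j + 2\<close> and the third term of \<open>PB1_aco_aco\<close> survives, but \<open>i + j + 1 > m\<close>\<close>
    then have "aco N (i + j + 1) (k + i + 1) L = 0"
      using assms by (intro aco_Tset_eq_0) auto
    then show ?thesis
      using assms unfolding PB1_shift by simp
  qed
qed

lemma PB1_coordfun_unlisted:
  assumes "0 < N" "\<not> listed N c d" "\<not> listed N d c"
  shows "PB1 N \<alpha> (coordfun N c) (coordfun N d) L = 0"
  \<comment> \<open>for \<open>c = Bc k\<close>, \<open>d = Bc l\<close> with \<open>k = l (mod N)\<close> two deltas fire, and their terms cancel\<close>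
  using assms by (cases c; cases d) (auto simp: PB1_aco_aco bco_eq_aco intro: aco_mod_cong)

theorem mainTheorem7:
  fixes N m :: nat and \<alpha> :: real and L :: loopmat
  assumes "N \<ge> 2" and "m \<ge> 1" and "N \<ge> 2 * m + 2"
    and "L \<in> Tset N m"
  shows
   "(\<forall>k. PB1 N \<alpha> (bco N k) (bco N (k + 1)) L = complex_of_real \<alpha> * aco N 1 k L)
  \<and> (\<forall>k j. 1 \<le> j \<and> j \<le> m \<longrightarrow> PB1 N \<alpha> (bco N k) (aco N j k) L = - aco N j k L)
  \<and> (\<forall>k j. 1 \<le> j \<and> j \<le> m \<longrightarrow> PB1 N \<alpha> (aco N j k) (bco N (k + j)) L = - aco N j k L)
  \<and> (\<forall>k j. 1 \<le> j \<and> j \<le> m \<longrightarrow>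
        PB1 N \<alpha> (bco N k) (aco N j (k + 1)) L = complex_of_real \<alpha> * aco N (j + 1) k L)
  \<and> (\<forall>k j. 1 \<le> j \<and> j \<le> m \<longrightarrow>
        PB1 N \<alpha> (aco N j k) (bco N (k + j + 1)) L = complex_of_real \<alpha> * aco N (j + 1) k L)
  \<and> (\<forall>k i j. 1 \<le> i \<and> i \<le> m \<and> 1 \<le> j \<and> j \<le> m \<longrightarrow>
        PB1 N \<alpha> (aco N i k) (aco N j (k + i)) L = - aco N (i + j) k L)
  \<and> (\<forall>k i j. 1 \<le> i \<and> i \<le> m \<and> 1 \<le> j \<and> j \<le> m \<longrightarrow>
        PB1 N \<alpha> (aco N i k) (aco N j (k + i + 1)) L = complex_of_real \<alpha> * aco N (i + j + 1) k L)
  \<and> (\<forall>c d. valid_coord m c \<and> valid_coord m d \<and> \<not> listed N c d \<and> \<not> listed N d c \<longrightarrow>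
        PB1 N \<alpha> (coordfun N c) (coordfun N d) L = 0)"
proof -
  have N: "0 < N" using assms by simp
  have adjacent: "PB1 N \<alpha> (aco N i k) (aco N j (k + i)) L = - aco N (i + j) k L"
    if "0 < i + j" "i \<le> m" "j \<le> m" for i j k
    using assms that by (intro PB1_aco_aco_adjacent) auto
  have one_apart: "PB1 N \<alpha> (aco N i k) (aco N j (k + i + 1)) L = \<alpha> * aco N (i + j + 1) k L"
    if "i \<le> m" "j \<le> m" for i j k
    using assms that by (intro PB1_aco_aco_one_apart) auto
  show ?thesis
    unfolding bco_eq_aco
    using adjacent[of 0] adjacent[of _ 0] adjacent
      one_apart[of 0 0] one_apart[of 0] one_apart[of _ 0] one_apart
      PB1_coordfun_unlisted[OF N]
    by simp
qed

end
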